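(* Let $p$, $q$ be distinct prime numbers, $r, s \geq 1$ integers, and $N = p^r q^s$. Let $D \in \mathbb{Z}_N^*$ be such that $D \bmod p$ is a quadratic non-residue in $\mathbb{Z}_p$ and $D \bmod q$ is a quadratic non-residue in $\mathbb{Z}_q$. Then for all $(x,y) \in \mathcal{H}_{D,\mathbb{Z}_N}$, $$(x,y)^{\otimes\, p^{r-1}(p+1)\, q^{s-1}(q+1)} \equiv (1,0) \pmod N,$$ where the power is taken with respect to $\otimes$.
   Context: For a commutative ring $R$ and $D \in R$, let $\mathcal{H}_{D,R} = \{(x,y) \in R \times R : x^2 - D y^2 = 1\}$, equipped with the product $(x,y) \otimes (w,z) = (xw + yzD,\ yw + xz)$; this is a commutative group with identity $(1,0)$. Here $\mathbb{Z}_N$ denotes the integers modulo $N$. *)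

theory Defs
  imports "HOL-Number_Theory.Number_Theory"
begin

definition ZN :: "int \<Rightarrow> int set" where
  "ZN N = {0..<N}"

definition ZN_units :: "int \<Rightarrow> int set" where
  "ZN_units N = {a \<in> ZN N. coprime a N}"

definition pell_conic :: "int \<Rightarrow> int \<Rightarrow> (int \<times> int) set" where
  "pell_conic N D = {(x, y). x \<in> ZN N \<and> y \<in> ZN N \<and> (x^2 - D * y^2) mod N = 1 mod N}"

definition pell_mult :: "int \<Rightarrow> int \<Rightarrow> int \<times> int \<Rightarrow> int \<times> int \<Rightarrow> int \<times> int" where
  "pell_mult N D a b =
     ((fst a * fst b + snd a * snd b * D) mod N, (snd a * fst b + fst a * snd b) mod N)"

fun pell_pow :: "int \<Rightarrow> int \<Rightarrow> int \<times> int \<Rightarrow> nat \<Rightarrow> int \<times> int" where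
  "pell_pow N D a 0 = (1 mod N, 0)"
| "pell_pow N D a (Suc n) = pell_mult N D a (pell_pow N D a n)"

end

theory Submission
  imports Defs "HOL-Computational_Algebra.Polynomial"
begin

(* Identify (x, y) with x + y t in Z[t]; modulo the ideal (N, t^2 - D) the product of the Pell
   conic becomes multiplication of polynomials. For an odd prime p with D a non-residue, the
   binomial theorem and Euler's criterion give the Frobenius relation
   (x + y t)^p = x^p + y^p D^((p-1)/2) t = x - y t  mod (p, t^2 - D),
   so (x + y t)^(p+1) = x^2 - D y^2 = 1. If g = 1 mod (p^k, t^2 - D) then g^p = 1 mod (p^(k+1),
   t^2 - D), which lifts this to the exponent p^(r-1) (p+1) modulo p^r; the two prime powers are
   combined by Bezout, and the resulting congruence is read off coefficientwise. *)

definition cong_ideal :: "'a::comm_ring_1 \<Rightarrow> 'a \<Rightarrow> 'a \<Rightarrow> 'a \<Rightarrow> bool" where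
  "cong_ideal m P x y \<longleftrightarrow> (\<exists>u v. x - y = m * u + P * v)"

lemma cong_ideal_refl [simp]: "cong_ideal m P x x"
  unfolding cong_ideal_def by (rule exI[of _ 0], rule exI[of _ 0]) simp

lemma cong_ideal_generator_left: "cong_ideal m P (m * u) 0"
  unfolding cong_ideal_def by (rule exI[of _ u], rule exI[of _ 0]) simp

lemma cong_ideal_add_generator_right: "cong_ideal m P (x + P * v) x"
  unfolding cong_ideal_def by (rule exI[of _ 0], rule exI[of _ v]) simp

lemma cong_ideal_sym: "cong_ideal m P x y \<Longrightarrow> cong_ideal m P y x"
  unfolding cong_ideal_def by (metis minus_diff_eq minus_add_distrib mult_minus_right)

lemma cong_ideal_trans [trans]: "cong_ideal m P x y \<Longrightarrow> cong_ideal m P y z \<Longrightarrow> cong_ideal m P x z"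
  unfolding cong_ideal_def
proof (elim exE)
  fix u v u' v' assume "x - y = m * u + P * v" "y - z = m * u' + P * v'"
  then have "x - z = m * (u + u') + P * (v + v')" by (simp add: algebra_simps)
  then show "\<exists>u v. x - z = m * u + P * v" by blast
qed

lemma cong_ideal_add:
  "cong_ideal m P x y \<Longrightarrow> cong_ideal m P x' y' \<Longrightarrow> cong_ideal m P (x + x') (y + y')"
  unfolding cong_ideal_def
proof (elim exE)
  fix u v u' v' assume "x - y = m * u + P * v" "x' - y' = m * u' + P * v'"
  then have "(x + x') - (y + y') = m * (u + u') + P * (v + v')" by (simp add: algebra_simps)
  then show "\<exists>u v. x + x' - (y + y') = m * u + P * v" by blast
qed

lemma cong_ideal_mult_left: "cong_ideal m P x y \<Longrightarrow> cong_ideal m P (z * x) (z * y)"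
  unfolding cong_ideal_def
proof (elim exE)
  fix u v assume "x - y = m * u + P * v"
  then have "z * x - z * y = m * (z * u) + P * (z * v)" by (simp add: algebra_simps)
  then show "\<exists>u v. z * x - z * y = m * u + P * v" by blast
qed

lemma cong_ideal_mult:
  "cong_ideal m P x y \<Longrightarrow> cong_ideal m P x' y' \<Longrightarrow> cong_ideal m P (x * x') (y * y')"
  by (metis cong_ideal_mult_left cong_ideal_trans mult.commute)

lemma cong_ideal_pow: "cong_ideal m P x y \<Longrightarrow> cong_ideal m P (x ^ n) (y ^ n)"
  by (induction n) (auto intro: cong_ideal_mult)

lemma cong_ideal_sum:
  "(\<And>i. i \<in> A \<Longrightarrow> cong_ideal m P (f i) (g i)) \<Longrightarrow> cong_ideal m P (sum f A) (sum g A)"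
  by (induction A rule: infinite_finite_induct) (auto intro: cong_ideal_add)

lemma cong_ideal_mult_coprime:
  assumes "s * a + t * b = 1" "cong_ideal a P x y" "cong_ideal b P x y"
  shows "cong_ideal (a * b) P x y"
proof -
  obtain u v u' v' where a: "x - y = a * u + P * v" and b: "x - y = b * u' + P * v'"
    using assms(2,3) unfolding cong_ideal_def by blast
  have "x - y = s * a * (x - y) + t * b * (x - y)"
    using assms(1) by (metis distrib_right mult_1)
  also have "\<dots> = s * a * (b * u' + P * v') + t * b * (a * u + P * v)"
    by (simp only: flip: a b)
  also have "\<dots> = a * b * (s * u' + t * u) + P * (s * a * v' + t * b * v)"
    by (simp add: algebra_simps)
  finally show ?thesis unfolding cong_ideal_def by blast
qed

lemma cong_ideal_binomial_prime:
  assumes "prime p"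
  shows "cong_ideal (of_nat p) P ((x + y) ^ p) (x ^ p + y ^ p)"
proof -
  define f where "f k = of_nat (p choose k) * x ^ k * y ^ (p - k)" for k
  have split: "(x + y) ^ p = f 0 + f p + (\<Sum>k\<in>{1..<p}. f k)"
  proof -
    have "{..p} = insert p (insert 0 {1..<p})"
      using prime_gt_0_nat[OF assms] by auto
    then show ?thesis
      unfolding binomial_ring[of x y p] f_def[symmetric] using prime_gt_0_nat[OF assms]
      by (simp add: add.assoc)
  qed
  have "cong_ideal (of_nat p) P (\<Sum>k\<in>{1..<p}. f k) (\<Sum>k\<in>{1..<p}. 0)"
  proof (rule cong_ideal_sum)
    fix k assume "k \<in> {1..<p}"
    then obtain c where "p choose k = p * c"
      using dvd_choose_prime[OF _ _ _ assms, of k] by (auto elim: dvdE)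
    then have "f k = of_nat p * (of_nat c * x ^ k * y ^ (p - k))"
      unfolding f_def by (simp add: mult.assoc)
    then show "cong_ideal (of_nat p) P (f k) 0"
      by (simp add: cong_ideal_generator_left)
  qed
  then have "cong_ideal (of_nat p) P ((x + y) ^ p) (f 0 + f p + 0)"
    unfolding split by (intro cong_ideal_add cong_ideal_refl) simp
  moreover have "f 0 + f p + 0 = x ^ p + y ^ p"
    by (simp add: f_def add.commute)
  ultimately show ?thesis
    by simp
qed

lemma cong_ideal_pow_lift:
  assumes "k \<ge> 1" "cong_ideal (of_nat n ^ k) P x 1"
  shows "cong_ideal (of_nat n ^ Suc k) P (x ^ n) 1"
proof -
  define m :: 'a where "m = of_nat n"
  obtain u v where uv: "x - 1 = m ^ k * u + P * v"
    using assms(2) unfolding cong_ideal_def m_def by blast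
  define z where "z = m ^ k * u"
  have "x - (1 + z) = m ^ Suc k * 0 + P * v"
    using uv unfolding z_def by (simp add: algebra_simps)
  then have "cong_ideal (m ^ Suc k) P x (1 + z)"
    unfolding cong_ideal_def by blast
  then have x_pow: "cong_ideal (m ^ Suc k) P (x ^ n) ((1 + z) ^ n)"
    by (rule cong_ideal_pow)
  have "z = m * (m ^ (k - 1) * u)"
    using assms(1) unfolding z_def by (simp add: power_eq_if mult.assoc)
  then have "cong_ideal m P z 0"
    by (simp add: cong_ideal_generator_left)
  then have "cong_ideal m P (\<Sum>i<n. (1 + z) ^ i) (\<Sum>i<n. (1 + 0) ^ i)"
    by (intro cong_ideal_sum cong_ideal_pow cong_ideal_add cong_ideal_refl)
  moreover have "(\<Sum>i<n. (1 + 0 :: 'a) ^ i) = m"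
    unfolding m_def by simp
  ultimately obtain u' v' where "(\<Sum>i<n. (1 + z) ^ i) - m = m * u' + P * v'"
    unfolding cong_ideal_def by auto
  then have sum_eq: "(\<Sum>i<n. (1 + z) ^ i) = m * (1 + u') + P * v'"
    by (simp add: diff_eq_eq algebra_simps)
  have "(1 + z) ^ n - 1 = z * (\<Sum>i<n. (1 + z) ^ i)"
    using power_diff_1_eq[of "1 + z" n] by simp
  also have "\<dots> = z * (m * (1 + u') + P * v')"
    by (simp only: sum_eq)
  also have "\<dots> = m ^ Suc k * (u * (1 + u')) + P * (z * v')"
    unfolding z_def by (simp add: algebra_simps)
  finally have "cong_ideal (m ^ Suc k) P ((1 + z) ^ n) 1"
    unfolding cong_ideal_def by blast
  with x_pow show ?thesis
    unfolding m_def by (rule cong_ideal_trans)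
qed

lemma cong_ideal_pow_prime_power_lift:
  assumes "cong_ideal (of_nat p) P x 1"
  shows "cong_ideal (of_nat p ^ Suc j) P (x ^ (p ^ j)) 1"
proof (induction j)
  case 0
  then show ?case using assms by simp
next
  case (Suc j)
  then have "cong_ideal (of_nat p ^ Suc (Suc j)) P ((x ^ (p ^ j)) ^ p) 1"
    by (intro cong_ideal_pow_lift) auto
  moreover have "x ^ (p ^ Suc j) = (x ^ (p ^ j)) ^ p"
    by (simp only: power_Suc2 power_mult)
  ultimately show ?case by simp
qed

lemma cong_ideal_of_int_mult_coprime:
  fixes a b :: int
  assumes "coprime a b" "cong_ideal (of_int a) P x y" "cong_ideal (of_int b) P x y"
  shows "cong_ideal (of_int (a * b)) P x y"
proof -
  obtain s t where "s * a + t * b = 1"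
    using bezout_int[of a b] assms(1) by auto
  then have "of_int s * of_int a + of_int t * of_int b = (1 :: 'a)"
    by (metis of_int_1 of_int_add of_int_mult)
  then show ?thesis
    unfolding of_int_mult by (rule cong_ideal_mult_coprime[OF _ assms(2,3)])
qed

lemma cong_ideal_linear_poly:
  fixes a b c d m :: int
  assumes "[a = b] (mod m)" "[c = d] (mod m)"
  shows "cong_ideal (of_int m) P [:a, c:] [:b, d:]"
proof -
  obtain k l where "a - b = m * k" "c - d = m * l"
    using assms unfolding cong_iff_dvd_diff by (auto elim!: dvdE)
  then have "[:a, c:] - [:b, d:] = of_int m * [:k, l:] + P * 0"
    by (simp add: of_int_poly)
  then show ?thesis
    unfolding cong_ideal_def by blast
qed

lemma poly_eq_monic_quadratic_mult_plus_linear: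
  fixes u :: "'a::comm_ring_1 poly"
  shows "\<exists>w c0 c1. u = [:a, b, 1:] * w + [:c0, c1:]"
proof (induction u)
  case 0
  have "(0 :: 'a poly) = [:a, b, 1:] * 0 + [:0, 0:]"
    by simp
  then show ?case by blast
next
  case (pCons c u)
  then obtain w c0 c1 where "u = [:a, b, 1:] * w + [:c0, c1:]"
    by blast
  then have "pCons c u = [:a, b, 1:] * (pCons 0 w + [:c1:]) + [:c - c1 * a, c0 - c1 * b:]"
    by (simp add: algebra_simps)
  then show ?case by blast
qed

lemma cong_ideal_linear_poly_imp_cong:
  fixes a b c d e f m :: int
  assumes "cong_ideal (of_int m) [:e, f, 1:] [:a, c:] [:b, d:]"
  shows "[a = b] (mod m)" "[c = d] (mod m)"
proof -
  let ?Q = "[:e, f, 1:]"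
  obtain u v where uv: "[:a, c:] - [:b, d:] = [:m:] * u + ?Q * v"
    using assms unfolding cong_ideal_def of_int_poly by auto
  obtain w c0 c1 where w: "u = ?Q * w + [:c0, c1:]"
    using poly_eq_monic_quadratic_mult_plus_linear by blast
  \<comment> \<open>stated for variables, so that simp does not expand the polynomial products\<close>
  have ring_identity: "M * (Q * w + L) + Q * v - M * L = Q * (v + M * w)" for M Q L :: "int poly"
    by (simp add: algebra_simps)
  define R where "R = [:a - b - m * c0, c - d - m * c1:]"
  have "R = ([:a, c:] - [:b, d:]) - [:m:] * [:c0, c1:]"
    unfolding R_def by simp
  also have "\<dots> = [:m:] * (?Q * w + [:c0, c1:]) + ?Q * v - [:m:] * [:c0, c1:]"
    by (simp only: uv w)
  also have "\<dots> = ?Q * (v + [:m:] * w)"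
    by (rule ring_identity)
  finally have R_eq: "R = ?Q * (v + [:m:] * w)" .
  have "R = 0"
  proof (rule ccontr)
    assume "R \<noteq> 0"
    then have "degree R = 2 + degree (v + [:m:] * w)"
      unfolding R_eq by (subst degree_mult_eq) auto
    moreover have "degree R \<le> 1"
      unfolding R_def using degree_pCons_le[of _ "[:c - d - m * c1:]"] by simp
    ultimately show False by simp
  qed
  then have "a - b = m * c0" "c - d = m * c1"
    unfolding R_def by simp_all
  then show "[a = b] (mod m)" "[c = d] (mod m)"
    unfolding cong_iff_dvd_diff by simp_all
qed

lemma int_pow_prime_cong:
  fixes x :: int
  assumes "prime p"
  shows "[x ^ p = x] (mod int p)"
proof -
  define a where "a = nat (x mod int p)"
  have "p > 0"
    using assms prime_gt_0_nat by blast
  then have x_cong: "[x = int a] (mod int p)"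
    unfolding a_def by (simp add: cong_def)
  have "[a ^ p = a] (mod p)"
  proof (cases "p dvd a")
    case True
    then show ?thesis
      using dvd_trans[OF True dvd_power[of p a]] \<open>p > 0\<close> by (auto simp: cong_def dvd_eq_mod_eq_0)
  next
    case False
    have "[a * a ^ (p - 1) = a * 1] (mod p)"
      using fermat_theorem[OF assms False] by (rule cong_scalar_left)
    then show ?thesis
      using \<open>p > 0\<close> by (simp add: power_eq_if)
  qed
  then have a_pow: "[int a ^ p = int a] (mod int p)"
    by (metis cong_int_iff of_nat_power)
  have "[x ^ p = int a ^ p] (mod int p)"
    using x_cong by (rule cong_pow)
  also note a_pow
  also have "[int a = x] (mod int p)"
    using x_cong by (rule cong_sym)
  finally show ?thesis .
qed

lemma nonresidue_euler_criterion:
  fixes D :: int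
  assumes "prime p" "\<not> QuadRes (int p) D"
  shows "odd p" "[D ^ ((p - 1) div 2) = -1] (mod int p)"
proof -
  show "odd p"
  proof
    assume "even p"
    have "p = 2"
    proof (rule ccontr)
      assume "p \<noteq> 2"
      then have "p > 2"
        using prime_ge_2_nat[OF assms(1)] by simp
      with \<open>even p\<close> show False
        using prime_odd_nat[OF assms(1)] by simp
    qed
    have "D mod 2 = 0 \<or> D mod 2 = 1"
      by presburger
    then have "[(D mod 2)\<^sup>2 = D] (mod 2)"
      by (auto simp: cong_def power2_eq_square)
    then have "QuadRes 2 D"
      unfolding QuadRes_def by blast
    with \<open>p = 2\<close> assms(2) show False
      by simp
  qed
  then have "p > 2"
    using prime_ge_2_nat[OF assms(1)] by (cases "p = 2") auto
  have "\<not> [D = 0] (mod int p)"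
  proof
    assume "[D = 0] (mod int p)"
    then have "[0\<^sup>2 = D] (mod int p)"
      by (simp add: cong_sym)
    with assms(2) show False
      unfolding QuadRes_def by blast
  qed
  then have "Legendre D (int p) = -1"
    using assms(2) by (simp add: Legendre_def)
  then show "[D ^ ((p - 1) div 2) = -1] (mod int p)"
    using euler_criterion[OF assms(1) \<open>p > 2\<close>, of D] by (simp add: cong_sym)
qed

definition pell_poly :: "int \<times> int \<Rightarrow> int poly" where
  "pell_poly a = [:fst a, snd a:]"

lemma pell_poly_pell_mult:
  "cong_ideal (of_int N) [:-D, 0, 1:] (pell_poly (pell_mult N D a b)) (pell_poly a * pell_poly b)"
proof -
  obtain x y u v where ab: "a = (x, y)" "b = (u, v)"
    by fastforce
  have "cong_ideal (of_int N) [:-D, 0, 1:] (pell_poly (pell_mult N D a b))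
          [:x * u + y * v * D, y * u + x * v:]"
    unfolding ab pell_mult_def pell_poly_def by (rule cong_ideal_linear_poly) simp_all
  also have "cong_ideal (of_int N) [:-D, 0, 1:] \<dots> (pell_poly a * pell_poly b)"
  proof -
    have prod_eq: "pell_poly a * pell_poly b
        = [:x * u + y * v * D, y * u + x * v:] + [:-D, 0, 1:] * [:y * v:]"
      unfolding ab pell_poly_def by (simp add: algebra_simps)
    show ?thesis
      unfolding prod_eq by (rule cong_ideal_sym[OF cong_ideal_add_generator_right])
  qed
  finally show ?thesis .
qed

lemma pell_poly_pell_pow:
  "cong_ideal (of_int N) [:-D, 0, 1:] (pell_poly (pell_pow N D a n)) (pell_poly a ^ n)"
proof (induction n)
  case 0
  have "cong_ideal (of_int N) [:-D, 0, 1:] [:1 mod N, 0:] [:1, 0:]"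
    by (rule cong_ideal_linear_poly) simp_all
  then show ?case
    by (simp add: pell_poly_def one_pCons)
next
  case (Suc n)
  have "cong_ideal (of_int N) [:-D, 0, 1:] (pell_poly (pell_pow N D a (Suc n)))
          (pell_poly a * pell_poly (pell_pow N D a n))"
    using pell_poly_pell_mult by simp
  also have "cong_ideal (of_int N) [:-D, 0, 1:] \<dots> (pell_poly a * pell_poly a ^ n)"
    using Suc.IH by (rule cong_ideal_mult_left)
  finally show ?case by simp
qed

lemma pell_pow_eq_unit:
  assumes "N > 1" "n > 0"
    and "[fst (pell_pow N D a n) = 1] (mod N)" "[snd (pell_pow N D a n) = 0] (mod N)"
  shows "pell_pow N D a n = (1, 0)"
proof -
  obtain n' where "n = Suc n'"
    using assms(2) gr0_implies_Suc by blast
  then have "fst (pell_pow N D a n) mod N = fst (pell_pow N D a n)"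
    "snd (pell_pow N D a n) mod N = snd (pell_pow N D a n)"
    by (simp_all add: pell_mult_def)
  with assms(1,3,4) have "fst (pell_pow N D a n) = 1" "snd (pell_pow N D a n) = 0"
    by (simp_all add: cong_def)
  then show ?thesis
    by (simp add: prod_eq_iff)
qed

lemma pell_poly_frobenius:
  fixes x y D :: int
  assumes "prime p" "odd p" "[D ^ ((p - 1) div 2) = -1] (mod int p)"
  shows "cong_ideal (of_nat p) [:-D, 0, 1:] ([:x, y:] ^ p) [:x, -y:]"
proof -
  define t :: "int poly" where "t = [:0, 1:]"
  define m where "m = (p - 1) div 2"
  have p_eq: "p = 2 * m + 1"
    using assms(2) unfolding m_def by presburger
  have split: "[:x, y:] = [:x:] + [:y:] * t"
    by (simp add: t_def)
  have "cong_ideal (of_nat p) [:-D, 0, 1:] ([:x, y:] ^ p) ([:x:] ^ p + ([:y:] * t) ^ p)"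
    unfolding split by (rule cong_ideal_binomial_prime[OF assms(1)])
  also have "([:y:] * t) ^ p = [:y ^ p:] * (t ^ 2) ^ m * t"
  proof -
    have "t ^ p = (t ^ 2) ^ m * t"
      unfolding p_eq by (simp add: power_add power_mult)
    then show ?thesis
      by (simp only: power_mult_distrib poly_const_pow mult.assoc)
  qed
  also have "cong_ideal (of_nat p) [:-D, 0, 1:] ([:x:] ^ p + [:y ^ p:] * (t ^ 2) ^ m * t)
               ([:x:] ^ p + [:y ^ p:] * [:D:] ^ m * t)"
  proof -
    have "t ^ 2 = [:D:] + [:-D, 0, 1:] * 1"
      by (simp add: t_def power2_eq_square)
    then have "cong_ideal (of_nat p) [:-D, 0, 1:] (t ^ 2) [:D:]"
      by (simp only: cong_ideal_add_generator_right)
    then show ?thesis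
      by (intro cong_ideal_add cong_ideal_mult cong_ideal_pow cong_ideal_refl)
  qed
  also have "[:x:] ^ p + [:y ^ p:] * [:D:] ^ m * t = [:x ^ p, y ^ p * D ^ m:]"
    by (simp add: t_def poly_const_pow)
  also have "cong_ideal (of_nat p) [:-D, 0, 1:] \<dots> [:x, -y:]"
  proof -
    have "[y ^ p * D ^ m = y * -1] (mod int p)"
      using int_pow_prime_cong[OF assms(1)] assms(3) unfolding m_def by (intro cong_mult)
    then show ?thesis
      using cong_ideal_linear_poly[OF int_pow_prime_cong[OF assms(1)], of "y ^ p * D ^ m" "-y"]
      by simp
  qed
  finally show ?thesis .
qed

lemma pell_poly_pow_Suc_prime:
  fixes x y D :: int
  assumes "prime p" "odd p" "[D ^ ((p - 1) div 2) = -1] (mod int p)"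
  shows "cong_ideal (of_nat p) [:-D, 0, 1:] ([:x, y:] ^ (p + 1)) [:x\<^sup>2 - D * y\<^sup>2:]"
proof -
  have "cong_ideal (of_nat p) [:-D, 0, 1:] ([:x, y:] ^ p * [:x, y:]) ([:x, -y:] * [:x, y:])"
    using pell_poly_frobenius[OF assms] by (rule cong_ideal_mult[OF _ cong_ideal_refl])
  also have "[:x, -y:] * [:x, y:] = [:x\<^sup>2 - D * y\<^sup>2:] + [:-D, 0, 1:] * [:- (y\<^sup>2):]"
    by (simp add: power2_eq_square algebra_simps)
  also have "cong_ideal (of_nat p) [:-D, 0, 1:] \<dots> [:x\<^sup>2 - D * y\<^sup>2:]"
    by (rule cong_ideal_add_generator_right)
  finally show ?thesis by simp
qed

lemma pell_poly_pow_prime_power: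
  fixes x y D :: int
  assumes "prime p" "odd p" "[D ^ ((p - 1) div 2) = -1] (mod int p)"
    and "[x\<^sup>2 - D * y\<^sup>2 = 1] (mod int p)" "r \<ge> 1"
  shows "cong_ideal (of_nat p ^ r) [:-D, 0, 1:] ([:x, y:] ^ (p ^ (r - 1) * (p + 1))) 1"
proof -
  have "cong_ideal (of_nat p) [:-D, 0, 1:] ([:x, y:] ^ (p + 1)) [:x\<^sup>2 - D * y\<^sup>2:]"
    by (rule pell_poly_pow_Suc_prime[OF assms(1-3)])
  also have "cong_ideal (of_nat p) [:-D, 0, 1:] \<dots> [:1:]"
    using cong_ideal_linear_poly[OF assms(4) cong_refl[of 0], where P = "[:-D, 0, 1:]"] by simp
  finally have "cong_ideal (of_nat p ^ Suc (r - 1)) [:-D, 0, 1:] (([:x, y:] ^ (p + 1)) ^ p ^ (r - 1)) 1"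
    by (intro cong_ideal_pow_prime_power_lift) (simp add: one_pCons)
  moreover have "Suc (r - 1) = r"
    using assms(5) by simp
  moreover have "([:x, y:] ^ (p + 1)) ^ p ^ (r - 1) = [:x, y:] ^ (p ^ (r - 1) * (p + 1))"
    by (metis power_mult mult.commute)
  ultimately show ?thesis
    by (simp only:)
qed

lemma pell_poly_pow_two_prime_powers:
  fixes x y D :: int
  assumes "prime p" "prime q" "p \<noteq> q" "r \<ge> 1" "s \<ge> 1"
    and "\<not> QuadRes (int p) D" "\<not> QuadRes (int q) D"
    and "[x\<^sup>2 - D * y\<^sup>2 = 1] (mod int (p ^ r * q ^ s))"
  shows "cong_ideal (of_int (int (p ^ r * q ^ s))) [:-D, 0, 1:]
           ([:x, y:] ^ (p ^ (r - 1) * (p + 1) * q ^ (s - 1) * (q + 1))) 1"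
proof -
  let ?Q = "[:-D, 0, 1:]"
  define e_p where "e_p = p ^ (r - 1) * (p + 1)"
  define e_q where "e_q = q ^ (s - 1) * (q + 1)"
  have "[x\<^sup>2 - D * y\<^sup>2 = 1] (mod int p)" "[x\<^sup>2 - D * y\<^sup>2 = 1] (mod int q)"
    using assms(4,5,8) by (auto elim!: cong_dvd_modulus simp: dvd_power dvd_mult dvd_mult2)
  then have "cong_ideal (of_nat p ^ r) ?Q ([:x, y:] ^ e_p) 1"
    "cong_ideal (of_nat q ^ s) ?Q ([:x, y:] ^ e_q) 1"
    unfolding e_p_def e_q_def
    using pell_poly_pow_prime_power[OF assms(1) nonresidue_euler_criterion[OF assms(1,6)]]
      pell_poly_pow_prime_power[OF assms(2) nonresidue_euler_criterion[OF assms(2,7)]]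
      assms(4,5)
    by blast+
  then have "cong_ideal (of_nat p ^ r) ?Q (([:x, y:] ^ e_p) ^ e_q) 1"
    "cong_ideal (of_nat q ^ s) ?Q (([:x, y:] ^ e_q) ^ e_p) 1"
    using cong_ideal_pow by fastforce+
  moreover have "([:x, y:] ^ e_q) ^ e_p = ([:x, y:] ^ e_p) ^ e_q"
    by (metis power_mult mult.commute)
  moreover have "coprime (int p ^ r) (int q ^ s)"
    using primes_coprime[OF assms(1-3)] by simp
  ultimately have "cong_ideal (of_int (int p ^ r * int q ^ s)) ?Q (([:x, y:] ^ e_p) ^ e_q) 1"
    by (intro cong_ideal_of_int_mult_coprime) simp_all
  moreover have "([:x, y:] ^ e_p) ^ e_q = [:x, y:] ^ (p ^ (r - 1) * (p + 1) * q ^ (s - 1) * (q + 1))"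
    unfolding e_p_def e_q_def by (simp only: power_mult[symmetric] mult.assoc)
  moreover have "int (p ^ r * q ^ s) = int p ^ r * int q ^ s"
    by simp
  ultimately show ?thesis
    by (simp only:)
qed

theorem mainTheorem2:
  fixes p q r s :: nat and N D :: int
  assumes "prime p" and "prime q" and "p \<noteq> q"
    and "r \<ge> 1" and "s \<ge> 1"
    and "N = int (p ^ r * q ^ s)"
    and "D \<in> ZN_units N"
    and "\<not> QuadRes (int p) (D mod int p)"
    and "\<not> QuadRes (int q) (D mod int q)"
  shows "\<forall>xy \<in> pell_conic N D.
           pell_pow N D xy (p ^ (r - 1) * (p + 1) * q ^ (s - 1) * (q + 1)) = (1, 0)"
proof
  let ?n = "p ^ (r - 1) * (p + 1) * q ^ (s - 1) * (q + 1)"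
  fix a assume "a \<in> pell_conic N D"
  then obtain x y where "a = (x, y)" and "[x\<^sup>2 - D * y\<^sup>2 = 1] (mod N)"
    unfolding pell_conic_def cong_def by auto
  moreover have "\<not> QuadRes (int p) D" "\<not> QuadRes (int q) D"
    using assms(8,9) by (simp_all add: QuadRes_def)
  ultimately have "cong_ideal (of_int N) [:-D, 0, 1:] (pell_poly a ^ ?n) 1"
    using pell_poly_pow_two_prime_powers[OF assms(1-5)] assms(6) by (simp add: pell_poly_def)
  then have "cong_ideal (of_int N) [:-D, 0, 1:] (pell_poly (pell_pow N D a ?n)) 1"
    by (rule cong_ideal_trans[OF pell_poly_pell_pow])
  then have "[fst (pell_pow N D a ?n) = 1] (mod N)" "[snd (pell_pow N D a ?n) = 0] (mod N)"
    using cong_ideal_linear_poly_imp_cong[where b = 1 and d = 0]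
    by (simp_all add: pell_poly_def one_pCons)
  moreover have "N > 1"
    using assms(4-6) prime_gt_1_nat[OF assms(1)] prime_gt_1_nat[OF assms(2)]
    by (simp add: less_1_mult one_less_power)
  moreover have "?n > 0"
    using prime_gt_0_nat[OF assms(1)] prime_gt_0_nat[OF assms(2)] by simp
  ultimately show "pell_pow N D a ?n = (1, 0)"
    by (intro pell_pow_eq_unit)
qed

end
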